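(* Consider a Time-and-Level-of-Use (TLOU) tariff for a single time frame $t$, given by a booking fee $K>0$, a step-wise non-increasing lower price function $\pi^L:[0,\infty)\to\mathbb{R}$ with finite set of breakpoints $C^L$, and a step-wise non-decreasing higher price function $\pi^H:[0,\infty)\to\mathbb{R}$ with finite set of breakpoints $C^H$, where $\pi^L(0)=\pi^H(0)=\pi_0(t)$. Let the user's consumption be a discrete random variable with finite support given by scenarios $\omega\in\Omega_t$, with consumption levels $x_\omega\ge 0$ and probabilities $p_\omega>0$. For a booked capacity $c\ge 0$ let $$\mathcal{C}(c)=K\cdot c+\sum_{\omega\in\Omega_t} x_\omega\, p_\omega\left(\pi^L(c)\,\mathbb{1}[x_\omega\le c]+\pi^H(c)\,\mathbb{1}[x_\omega>c]\right)$$ be the user's expected cost. Then any capacity $c^\ast\ge 0$ minimizing $\mathcal{C}$ over $c\ge 0$ (an optimal booked capacity for the user at time frame $t$) belongs to the finite set $$S_t=\{0\}\cup C^L\cup\{x_\omega:\omega\in\Omega_t\}.$$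
   Context: Under TLOU, a user books a capacity $c\ge0$ for a time frame $t$; if the realized consumption $x$ satisfies $x\le c$ the total cost is $K c+\pi^L(c)x$, and otherwise it is $Kc+\pi^H(c)x$. The price functions are step functions: for breakpoints $c_1<c_2<\dots<c_m$ in $C^L$ (all positive), $\pi^L$ is constant on $[0,c_1)$ (equal to $\pi_0(t)$, the Time-of-Use price of the time frame) and on each interval $[c_j,c_{j+1})$ and $[c_m,\infty)$, with its values non-increasing from one step to the next; $\pi^H$ is defined analogously with breakpoints $C^H$ and values non-decreasing from one step to the next. The notation $\mathbb{1}[\cdot]$ denotes the indicator of the condition. *)

theory Defs
  imports Main "HOL-Library.Indicator_Function"
begin

text \<open>A step function on [0,\<infinity>) with finite set of positive breakpoints B:
  it is constant on [0, b1), on each [b_j, b_(j+1)) and on [b_m, \<infinity>).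
  Equivalently: two points x \<le> y of [0,\<infinity>) with no breakpoint b in (x, y]
  lie in the same step and get the same value.\<close>
definition step_function_on :: "real set \<Rightarrow> (real \<Rightarrow> real) \<Rightarrow> bool" where
  "step_function_on B f \<longleftrightarrow> finite B \<and> (\<forall>b\<in>B. b > 0) \<and>
     (\<forall>x y. 0 \<le> x \<longrightarrow> x \<le> y \<longrightarrow> \<not> (\<exists>b\<in>B. x < b \<and> b \<le> y) \<longrightarrow> f x = f y)"

definition tlou_cost ::
  "real \<Rightarrow> (real \<Rightarrow> real) \<Rightarrow> (real \<Rightarrow> real) \<Rightarrow> 'w set \<Rightarrow> ('w \<Rightarrow> real) \<Rightarrow> ('w \<Rightarrow> real) \<Rightarrow> real \<Rightarrow> real"
where
  "tlou_cost K piL piH \<Omega> x p c =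
     K * c + (\<Sum>\<omega>\<in>\<Omega>. x \<omega> * p \<omega> *
        (piL c * indicator {..c} (x \<omega>) + piH c * indicator {c<..} (x \<omega>)))"

end

theory Submission
  imports Defs
begin

text \<open>If \<open>c\<^sup>*\<close> lay outside \<open>S\<^sub>t\<close>, then, \<open>S\<^sub>t\<close> being finite and containing \<open>0\<close>,
  some interval \<open>[c', c\<^sup>*]\<close> with \<open>0 \<le> c' < c\<^sup>*\<close> would avoid \<open>S\<^sub>t\<close>. Moving from \<open>c\<^sup>*\<close>
  down to \<open>c'\<close> crosses no breakpoint of \<open>\<pi>\<^sup>L\<close>, so the lower price is unchanged; it
  does not increase the higher price; and it crosses no consumption level, so every
  scenario is billed at the same kind of price. Hence the consumption cost does not
  increase while the booking fee strictly decreases, contradicting optimality.\<close>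

lemma step_function_on_eq:
  assumes "step_function_on B f" "0 \<le> a" "a \<le> b" "{a<..b} \<inter> B = {}"
  shows "f a = f b"
  using assms unfolding step_function_on_def by (meson disjoint_iff greaterThanAtMost_iff)

lemma finite_avoiding_interval_below:
  fixes S :: "real set"
  assumes "finite S" "c \<notin> S" "a < c"
  obtains c' where "a \<le> c'" "c' < c" "{c'..c} \<inter> S = {}"
proof -
  define m where "m = Max (insert a {s \<in> S. s < c})"
  have fin: "finite (insert a {s \<in> S. s < c})" using \<open>finite S\<close> by simp
  have "m \<in> insert a {s \<in> S. s < c}" unfolding m_def using fin by (rule Max_in) simp
  then have "m < c" using \<open>a < c\<close> by auto
  have "a \<le> m" unfolding m_def using fin by simp
  have below_m: "s \<le> m" if "s \<in> S" "s < c" for s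
    unfolding m_def using fin that by simp
  show thesis
  proof
    show "a \<le> (m + c) / 2" using \<open>a \<le> m\<close> \<open>m < c\<close> by simp
    show "(m + c) / 2 < c" using \<open>m < c\<close> by simp
    show "{(m + c) / 2..c} \<inter> S = {}"
      using below_m \<open>m < c\<close> \<open>c \<notin> S\<close> by (force simp: order.order_iff_strict)
  qed
qed

lemma tlou_cost_less:
  assumes "K > 0" "c' < c"
    and "piL c' \<le> piL c" "piH c' \<le> piH c"
    and "\<forall>\<omega>\<in>\<Omega>. x \<omega> * p \<omega> \<ge> 0"
    and "x ` \<Omega> \<inter> {c'<..c} = {}"
  shows "tlou_cost K piL piH \<Omega> x p c' < tlou_cost K piL piH \<Omega> x p c"
proof -
  have "x \<omega> * p \<omega> * (piL c' * indicator {..c'} (x \<omega>) + piH c' * indicator {c'<..} (x \<omega>))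
      \<le> x \<omega> * p \<omega> * (piL c * indicator {..c} (x \<omega>) + piH c * indicator {c<..} (x \<omega>))"
    if "\<omega> \<in> \<Omega>" for \<omega>
  proof (rule mult_left_mono)
    have "x \<omega> \<le> c' \<or> c < x \<omega>" using assms(6) that by fastforce
    then show "piL c' * indicator {..c'} (x \<omega>) + piH c' * indicator {c'<..} (x \<omega>)
      \<le> piL c * indicator {..c} (x \<omega>) + piH c * indicator {c<..} (x \<omega>)"
      using assms(2-4) by (auto simp: indicator_def)
  qed (use assms(5) that in blast)
  then have "(\<Sum>\<omega>\<in>\<Omega>. x \<omega> * p \<omega> *
        (piL c' * indicator {..c'} (x \<omega>) + piH c' * indicator {c'<..} (x \<omega>)))
      \<le> (\<Sum>\<omega>\<in>\<Omega>. x \<omega> * p \<omega> * (piL c * indicator {..c} (x \<omega>) + piH c * indicator {c<..} (x \<omega>)))"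
    by (rule sum_mono)
  moreover have "K * c' < K * c" using assms(1,2) by simp
  ultimately show ?thesis unfolding tlou_cost_def by linarith
qed

theorem proposition1:
  fixes K pi0 :: real
    and piL piH :: "real \<Rightarrow> real"
    and CL CH :: "real set"
    and \<Omega> :: "'w set"
    and x p :: "'w \<Rightarrow> real"
    and cstar :: real
  assumes K_pos: "K > 0"
    and L_step: "step_function_on CL piL"
    and L_noninc: "\<forall>a b. 0 \<le> a \<longrightarrow> a \<le> b \<longrightarrow> piL b \<le> piL a"
    and H_step: "step_function_on CH piH"
    and H_nondec: "\<forall>a b. 0 \<le> a \<longrightarrow> a \<le> b \<longrightarrow> piH a \<le> piH b"
    and L0: "piL 0 = pi0" and H0: "piH 0 = pi0"
    and fin: "finite \<Omega>"
    and x_nonneg: "\<forall>\<omega>\<in>\<Omega>. x \<omega> \<ge> 0"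
    and p_pos: "\<forall>\<omega>\<in>\<Omega>. p \<omega> > 0"
    and p_sum: "(\<Sum>\<omega>\<in>\<Omega>. p \<omega>) = 1"
    and cstar_nonneg: "cstar \<ge> 0"
    and cstar_opt: "\<forall>c\<ge>0. tlou_cost K piL piH \<Omega> x p cstar \<le> tlou_cost K piL piH \<Omega> x p c"
  shows "cstar \<in> {0} \<union> CL \<union> x ` \<Omega>"
proof (rule ccontr)
  assume outside: "cstar \<notin> {0} \<union> CL \<union> x ` \<Omega>"
  have "finite ({0} \<union> CL \<union> x ` \<Omega>)" using L_step fin unfolding step_function_on_def by simp
  moreover note outside
  moreover have "0 < cstar" using outside cstar_nonneg by auto
  ultimately obtain c' where c': "0 \<le> c'" "c' < cstar" "{c'..cstar} \<inter> ({0} \<union> CL \<union> x ` \<Omega>) = {}"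
    by (rule finite_avoiding_interval_below)
  have "piL c' = piL cstar"
    using L_step c' by (intro step_function_on_eq) (auto simp: disjoint_iff)
  moreover have "piH c' \<le> piH cstar" using H_nondec c' by simp
  moreover have "\<forall>\<omega>\<in>\<Omega>. x \<omega> * p \<omega> \<ge> 0" using x_nonneg p_pos by (simp add: less_imp_le)
  moreover have "x ` \<Omega> \<inter> {c'<..cstar} = {}"
    using c'(3) greaterThanAtMost_subseteq_atLeastAtMost_iff by blast
  ultimately have "tlou_cost K piL piH \<Omega> x p c' < tlou_cost K piL piH \<Omega> x p cstar"
    using K_pos c'(2) by (intro tlou_cost_less) auto
  then show False using cstar_opt c'(1) by fastforce
qed

end
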